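(* Let $$S(t,p,q,x,y,u,v)=\sum_{\pi}t^{|\pi|}p^{\mathrm{asc}(\pi)}q^{\mathrm{des}(\pi)}x^{\mathrm{lmax}(\pi)}y^{\mathrm{rmax}(\pi)}u^{\mathrm{lmin}(\pi)}v^{\mathrm{rmin}(\pi)},$$ the sum over all separable permutations $\pi$, and let $I(t,p,q,x,y,u,v)$ be the same sum restricted to irreducible separable permutations. Then, as formal power series, $$S(t,p,q,x,y,u,v)=xyuvt+p\,S(t,p,q,x,1,u,v)\,I(t,p,q,x,y,1,v)+q\bigl(S(t,p,q,x,y,u,1)-I(t,p,q,x,y,u,1)+xyut\bigr)S(t,p,q,1,y,u,v)$$ and $$I(t,p,q,x,y,u,v)=xyuvt+q\bigl(S(t,p,q,x,y,u,1)-I(t,p,q,x,y,u,1)+xyut\bigr)S(t,p,q,1,y,u,v).$$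
   Context: A permutation of length $n$ is a word $\pi=\pi_1\cdots\pi_n$ containing each element of $[n]$ exactly once; $|\pi|=n$. For $\pi$ of length $m$ and $\sigma$ of length $n$, $\pi\oplus\sigma=\pi_1\cdots\pi_m(\sigma_1+m)\cdots(\sigma_n+m)$ and $\pi\ominus\sigma=(\pi_1+n)\cdots(\pi_m+n)\sigma_1\cdots\sigma_n$. Separable permutations are the permutations of length $\ge1$ obtained from the permutation $1$ by repeatedly applying $\oplus$ and $\ominus$ (equivalently, those avoiding the patterns $2413$ and $3142$); the empty permutation is not separable. The permutation $1$ is irreducible; a permutation of length $n\ge2$ is irreducible if there is no $i$ with $2\le i\le n$ such that every element of $\pi_1\cdots\pi_{i-1}$ is less than every element of $\pi_i\cdots\pi_n$. Statistics: $\mathrm{asc}(\pi)=\#\{i<n:\pi_i<\pi_{i+1}\}$, $\mathrm{des}(\pi)=\#\{i<n:\pi_i>\pi_{i+1}\}$; $\pi_i$ is a left-to-right maximum (minimum) if $\pi_i>\pi_j$ ($\pi_i<\pi_j$) for all $j<i$, and a right-to-left maximum (minimum) if $\pi_i>\pi_j$ ($\pi_i<\pi_j$) for all $j>i$; $\mathrm{lmax},\mathrm{lmin},\mathrm{rmax},\mathrm{rmin}$ count these. *)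

theory Defs
  imports "HOL-Computational_Algebra.Formal_Power_Series"
begin

definition perms :: "nat \<Rightarrow> nat list set" where
  "perms n = {xs. distinct xs \<and> set xs = {1..n}}"

definition psum :: "nat list \<Rightarrow> nat list \<Rightarrow> nat list" where
  "psum a b = a @ map (\<lambda>j. j + length a) b"

definition pskew :: "nat list \<Rightarrow> nat list \<Rightarrow> nat list" where
  "pskew a b = map (\<lambda>j. j + length b) a @ b"

inductive separable :: "nat list \<Rightarrow> bool" where
  one: "separable [1]"
| dsum: "separable a \<Longrightarrow> separable b \<Longrightarrow> separable (psum a b)"
| skew: "separable a \<Longrightarrow> separable b \<Longrightarrow> separable (pskew a b)"

definition irreducible_perm :: "nat list \<Rightarrow> bool" where
  "irreducible_perm \<pi> \<longleftrightarrow> \<pi> = [1] \<or>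
     (length \<pi> \<ge> 2 \<and> \<not> (\<exists>i. 2 \<le> i \<and> i \<le> length \<pi> \<and>
        (\<forall>a\<in>set (take (i - 1) \<pi>). \<forall>b\<in>set (drop (i - 1) \<pi>). a < b)))"

definition asc :: "nat list \<Rightarrow> nat" where
  "asc \<pi> = card {i. Suc i < length \<pi> \<and> \<pi> ! i < \<pi> ! Suc i}"

definition des :: "nat list \<Rightarrow> nat" where
  "des \<pi> = card {i. Suc i < length \<pi> \<and> \<pi> ! i > \<pi> ! Suc i}"

definition lmax :: "nat list \<Rightarrow> nat" where
  "lmax \<pi> = card {i. i < length \<pi> \<and> (\<forall>j<i. \<pi> ! i > \<pi> ! j)}"

definition lmin :: "nat list \<Rightarrow> nat" where
  "lmin \<pi> = card {i. i < length \<pi> \<and> (\<forall>j<i. \<pi> ! i < \<pi> ! j)}"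

definition rmax :: "nat list \<Rightarrow> nat" where
  "rmax \<pi> = card {i. i < length \<pi> \<and> (\<forall>j. i < j \<and> j < length \<pi> \<longrightarrow> \<pi> ! i > \<pi> ! j)}"

definition rmin :: "nat list \<Rightarrow> nat" where
  "rmin \<pi> = card {i. i < length \<pi> \<and> (\<forall>j. i < j \<and> j < length \<pi> \<longrightarrow> \<pi> ! i < \<pi> ! j)}"

definition wt :: "'a::comm_ring_1 \<Rightarrow> 'a \<Rightarrow> 'a \<Rightarrow> 'a \<Rightarrow> 'a \<Rightarrow> 'a \<Rightarrow> nat list \<Rightarrow> 'a" where
  "wt p q x y u v \<pi> = p ^ asc \<pi> * q ^ des \<pi> * x ^ lmax \<pi> * y ^ rmax \<pi> * u ^ lmin \<pi> * v ^ rmin \<pi>"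

definition Sgf :: "'a::comm_ring_1 \<Rightarrow> 'a \<Rightarrow> 'a \<Rightarrow> 'a \<Rightarrow> 'a \<Rightarrow> 'a \<Rightarrow> 'a fps" where
  "Sgf p q x y u v = Abs_fps (\<lambda>n. \<Sum>\<pi>\<in>{\<pi>\<in>perms n. separable \<pi>}. wt p q x y u v \<pi>)"

definition Igf :: "'a::comm_ring_1 \<Rightarrow> 'a \<Rightarrow> 'a \<Rightarrow> 'a \<Rightarrow> 'a \<Rightarrow> 'a \<Rightarrow> 'a fps" where
  "Igf p q x y u v = Abs_fps (\<lambda>n. \<Sum>\<pi>\<in>{\<pi>\<in>perms n. separable \<pi> \<and> irreducible_perm \<pi>}. wt p q x y u v \<pi>)"

end

theory Submission
  imports Defs
begin

(* Every separable permutation other than 1 is, in exactly one way, either a direct sum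
   a (+) b with b irreducible (these are the reducible ones) or a skew sum a (-) b with a equal
   to 1 or reducible (these are the irreducible ones). A direct sum creates one ascent, adds up
   lmax and rmin, and inherits lmin from a and rmax from b; a skew sum creates one descent, adds
   up lmin and rmax, and inherits lmax from a and rmin from b. Summing weights over the two
   decompositions gives S - I = p S(y:=1) I(u:=1) and I - xyuvt = q K(v:=1) S(x:=1), where
   K = S - I + xyuvt enumerates the separable permutations that are 1 or reducible. *)

section \<open>Records and adjacent pairs of lists\<close>

lemma card_less_reflect:
  fixes n :: nat
  shows "card {i. i < n \<and> P (n - Suc i)} = card {i. i < n \<and> P i}"
  by (rule bij_betw_same_card[where f="\<lambda>i. n - Suc i"],
      rule bij_betw_byWitness[where f'="\<lambda>i. n - Suc i"]) auto

lemma card_less_add: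
  fixes m n :: nat
  shows "card {i. i < m + n \<and> P i} = card {i. i < m \<and> P i} + card {j. j < n \<and> P (m + j)}"
proof -
  have "{i. i < m + n \<and> P i} = {i. i < m \<and> P i} \<union> (+) m ` {j. j < n \<and> P (m + j)}"
  proof (intro set_eqI iffI)
    fix i assume "i \<in> {i. i < m + n \<and> P i}"
    then show "i \<in> {i. i < m \<and> P i} \<union> (+) m ` {j. j < n \<and> P (m + j)}"
      by (cases "i < m") (auto simp: image_iff intro!: exI[where x="i - m"])
  qed auto
  also have "card \<dots> = card {i. i < m \<and> P i} + card ((+) m ` {j. j < n \<and> P (m + j)})"
    by (rule card_Un_disjoint) auto
  also have "card ((+) m ` {j. j < n \<and> P (m + j)}) = card {j. j < n \<and> P (m + j)}"
    by (simp add: card_image)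
  finally show ?thesis .
qed

lemma all_less_add_iff:
  fixes m n :: nat
  shows "(\<forall>k<m + n. P k) \<longleftrightarrow> (\<forall>k<m. P k) \<and> (\<forall>k<n. P (m + k))"
proof (intro iffI conjI allI impI)
  fix k assume "(\<forall>k<m. P k) \<and> (\<forall>k<n. P (m + k))" "k < m + n"
  then show "P k"
    by (cases "k < m") (auto dest!: spec[where x="k - m"])
qed auto

(* lmax, lmin, rmax, rmin, asc and des are the following counts for the orders < and >, so their
   behaviour under concatenation is proved once, for an arbitrary relation. *)
definition left_records :: "('a \<Rightarrow> 'a \<Rightarrow> bool) \<Rightarrow> 'a list \<Rightarrow> nat" where
  "left_records R xs = card {i. i < length xs \<and> (\<forall>j<i. R (xs ! j) (xs ! i))}"

definition right_records :: "('a \<Rightarrow> 'a \<Rightarrow> bool) \<Rightarrow> 'a list \<Rightarrow> nat" where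
  "right_records R xs =
     card {i. i < length xs \<and> (\<forall>j. i < j \<and> j < length xs \<longrightarrow> R (xs ! j) (xs ! i))}"

definition adjacent_pairs :: "('a \<Rightarrow> 'a \<Rightarrow> bool) \<Rightarrow> 'a list \<Rightarrow> nat" where
  "adjacent_pairs R xs = card {i. Suc i < length xs \<and> R (xs ! i) (xs ! Suc i)}"

lemma lmax_eq_left_records: "lmax \<pi> = left_records (<) \<pi>"
  and lmin_eq_left_records: "lmin \<pi> = left_records (>) \<pi>"
  and rmax_eq_right_records: "rmax \<pi> = right_records (<) \<pi>"
  and rmin_eq_right_records: "rmin \<pi> = right_records (>) \<pi>"
  and asc_eq_adjacent_pairs: "asc \<pi> = adjacent_pairs (<) \<pi>"
  and des_eq_adjacent_pairs: "des \<pi> = adjacent_pairs (>) \<pi>"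
  by (simp_all add: lmax_def lmin_def rmax_def rmin_def asc_def des_def
      left_records_def right_records_def adjacent_pairs_def)

lemma right_records_eq_left_records_rev: "right_records R xs = left_records R (rev xs)"
proof -
  define n where "n = length xs"
  have reflect: "(\<forall>j<n - Suc i. R (xs ! (n - Suc j)) (xs ! i))
      \<longleftrightarrow> (\<forall>j. i < j \<and> j < n \<longrightarrow> R (xs ! j) (xs ! i))" if "i < n" for i
  proof (intro iffI allI impI)
    fix j assume "\<forall>j<n - Suc i. R (xs ! (n - Suc j)) (xs ! i)" "i < j \<and> j < n"
    moreover have "n - Suc j < n - Suc i" "n - Suc (n - Suc j) = j"
      using \<open>i < j \<and> j < n\<close> by arith+
    ultimately show "R (xs ! j) (xs ! i)" by metis
  next
    fix j assume "\<forall>j. i < j \<and> j < n \<longrightarrow> R (xs ! j) (xs ! i)" "j < n - Suc i"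
    then show "R (xs ! (n - Suc j)) (xs ! i)" by simp
  qed
  have "left_records R (rev xs)
      = card {i. i < n \<and> (\<forall>j<n - Suc i. R (xs ! (n - Suc j)) (xs ! (n - Suc (n - Suc i))))}"
    unfolding left_records_def
    by (subst card_less_reflect[symmetric]) (simp add: rev_nth n_def)
  also have "\<dots> = right_records R xs"
    unfolding right_records_def n_def[symmetric]
    by (intro arg_cong[where f=card] Collect_cong) (auto simp: reflect)
  finally show ?thesis ..
qed

lemma left_records_append:
  "left_records R (xs @ ys) = left_records R xs +
     card {j. j < length ys \<and> (\<forall>k<length xs. R (xs ! k) (ys ! j)) \<and> (\<forall>k<j. R (ys ! k) (ys ! j))}"
proof -
  have "left_records R (xs @ ys) =
      card {i. i < length xs \<and> (\<forall>j<i. R ((xs @ ys) ! j) ((xs @ ys) ! i))} +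
      card {j. j < length ys \<and> (\<forall>k<length xs + j. R ((xs @ ys) ! k) ((xs @ ys) ! (length xs + j)))}"
    unfolding left_records_def by (simp add: card_less_add)
  also have "{i. i < length xs \<and> (\<forall>j<i. R ((xs @ ys) ! j) ((xs @ ys) ! i))} =
      {i. i < length xs \<and> (\<forall>j<i. R (xs ! j) (xs ! i))}"
    by (auto simp: nth_append)
  also have "{j. j < length ys \<and> (\<forall>k<length xs + j. R ((xs @ ys) ! k) ((xs @ ys) ! (length xs + j)))} =
      {j. j < length ys \<and> (\<forall>k<length xs. R (xs ! k) (ys ! j)) \<and> (\<forall>k<j. R (ys ! k) (ys ! j))}"
    by (simp only: all_less_add_iff) (auto simp: nth_append)
  finally show ?thesis
    by (simp add: left_records_def)
qed

lemma left_records_append_related: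
  assumes "\<forall>a\<in>set xs. \<forall>b\<in>set ys. R a b"
  shows "left_records R (xs @ ys) = left_records R xs + left_records R ys"
proof -
  have "{j. j < length ys \<and> (\<forall>k<length xs. R (xs ! k) (ys ! j)) \<and> (\<forall>k<j. R (ys ! k) (ys ! j))} =
      {j. j < length ys \<and> (\<forall>k<j. R (ys ! k) (ys ! j))}"
    using assms by auto
  then show ?thesis
    unfolding left_records_append by (simp add: left_records_def)
qed

lemma left_records_append_unrelated:
  assumes "xs \<noteq> []" and "\<forall>a\<in>set xs. \<forall>b\<in>set ys. \<not> R a b"
  shows "left_records R (xs @ ys) = left_records R xs"
proof -
  have "{j. j < length ys \<and> (\<forall>k<length xs. R (xs ! k) (ys ! j)) \<and> (\<forall>k<j. R (ys ! k) (ys ! j))} = {}"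
    using assms by (auto dest!: spec[where x=0])
  then show ?thesis
    unfolding left_records_append by simp
qed

lemma right_records_append_related:
  assumes "\<forall>a\<in>set xs. \<forall>b\<in>set ys. R b a"
  shows "right_records R (xs @ ys) = right_records R xs + right_records R ys"
  using assms left_records_append_related[where xs="rev ys" and ys="rev xs" and R=R]
  by (simp add: right_records_eq_left_records_rev)

lemma right_records_append_unrelated:
  assumes "ys \<noteq> []" and "\<forall>a\<in>set xs. \<forall>b\<in>set ys. \<not> R b a"
  shows "right_records R (xs @ ys) = right_records R ys"
  using assms left_records_append_unrelated[where xs="rev ys" and ys="rev xs" and R=R]
  by (simp add: right_records_eq_left_records_rev)

lemma left_records_map:
  assumes "\<And>a b. R (f a) (f b) \<longleftrightarrow> R a b"
  shows "left_records R (map f xs) = left_records R xs"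
  unfolding left_records_def by (auto intro!: arg_cong[where f=card] simp: assms)

lemma right_records_map:
  assumes "\<And>a b. R (f a) (f b) \<longleftrightarrow> R a b"
  shows "right_records R (map f xs) = right_records R xs"
  by (simp add: right_records_eq_left_records_rev rev_map left_records_map assms)

lemma adjacent_pairs_map:
  assumes "\<And>a b. R (f a) (f b) \<longleftrightarrow> R a b"
  shows "adjacent_pairs R (map f xs) = adjacent_pairs R xs"
  unfolding adjacent_pairs_def by (auto intro!: arg_cong[where f=card] simp: assms)

lemma adjacent_pairs_append:
  assumes "xs \<noteq> []" and "ys \<noteq> []"
  shows "adjacent_pairs R (xs @ ys) =
    adjacent_pairs R xs + adjacent_pairs R ys + (if R (last xs) (hd ys) then 1 else 0)"
proof -
  define m where "m = length xs - 1"
  define n where "n = length ys - 1"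
  define P where "P i \<longleftrightarrow> R ((xs @ ys) ! i) ((xs @ ys) ! Suc i)" for i
  have len: "length xs = Suc m" "length ys = Suc n"
    using assms by (simp_all add: m_def n_def)
  have "adjacent_pairs R (xs @ ys) = card {i. i < m + (1 + n) \<and> P i}"
    unfolding adjacent_pairs_def P_def using len by simp
  also have "\<dots> = card {i. i < m \<and> P i} + card {j. j < 1 \<and> P (m + j)} +
      card {j. j < n \<and> P (m + (1 + j))}"
    by (simp only: card_less_add add.assoc)
  also have "{i. i < m \<and> P i} = {i. Suc i < length xs \<and> R (xs ! i) (xs ! Suc i)}"
    using len by (auto simp: P_def nth_append)
  also have "{j. j < n \<and> P (m + (1 + j))} = {i. Suc i < length ys \<and> R (ys ! i) (ys ! Suc i)}"
    using len by (auto simp: P_def nth_append)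
  also have "{j. j < 1 \<and> P (m + j)} = (if R (last xs) (hd ys) then {0} else {})"
    using assms len by (auto simp: P_def nth_append last_conv_nth hd_conv_nth)
  finally show ?thesis
    by (simp add: adjacent_pairs_def)
qed

section \<open>Direct and skew sums of permutations\<close>

lemma perms_length: "\<pi> \<in> perms n \<Longrightarrow> length \<pi> = n"
  unfolding perms_def using distinct_card by fastforce

lemma finite_perms: "finite (perms n)"
proof (rule finite_subset)
  show "perms n \<subseteq> {xs. set xs \<subseteq> {1..n} \<and> length xs = n}"
    using perms_length by (auto simp: perms_def)
qed (simp add: finite_lists_length_eq)

lemma singleton_in_perms_iff: "[1] \<in> perms n \<longleftrightarrow> n = 1"
proof -
  have "{1} = {1..n} \<longleftrightarrow> n = 1"
    by (metis atLeastAtMost_singleton atLeastAtMost_singleton_iff)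
  then show ?thesis
    by (simp add: perms_def)
qed

lemma set_shift_perm: "\<pi> \<in> perms n \<Longrightarrow> set (map (\<lambda>j. j + m) \<pi>) = {m + 1..m + n}"
  and distinct_shift_perm: "\<pi> \<in> perms n \<Longrightarrow> distinct (map (\<lambda>j. j + m) \<pi>)"
  by (auto simp: perms_def distinct_map inj_on_def image_iff intro!: bexI[where x="_ - m"])

lemma psum_in_perms: "a \<in> perms m \<Longrightarrow> b \<in> perms n \<Longrightarrow> psum a b \<in> perms (m + n)"
  using set_shift_perm[of b n m] distinct_shift_perm[of b n m] perms_length[of a m]
  by (auto simp: perms_def psum_def)

lemma pskew_in_perms: "a \<in> perms m \<Longrightarrow> b \<in> perms n \<Longrightarrow> pskew a b \<in> perms (m + n)"
  using set_shift_perm[of a m n] distinct_shift_perm[of a m n] perms_length[of b n]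
  by (auto simp: perms_def pskew_def)

lemma length_psum [simp]: "length (psum a b) = length a + length b"
  by (simp add: psum_def)

lemma length_pskew [simp]: "length (pskew a b) = length a + length b"
  by (simp add: pskew_def)

lemma psum_assoc: "psum (psum a b) c = psum a (psum b c)"
  by (simp add: psum_def add.assoc)

lemma pskew_assoc: "pskew (pskew a b) c = pskew a (pskew b c)"
  by (simp add: pskew_def add.assoc)

lemma psum_eq_append: "a \<in> perms m \<Longrightarrow> psum a b = a @ map (\<lambda>j. j + m) b"
  by (simp add: psum_def perms_length)

lemma pskew_eq_append: "b \<in> perms n \<Longrightarrow> pskew a b = map (\<lambda>j. j + n) a @ b"
  by (simp add: pskew_def perms_length)

lemma psum_blocks_less:
  "a \<in> perms m \<Longrightarrow> b \<in> perms n \<Longrightarrow> \<forall>i\<in>set a. \<forall>j\<in>set (map (\<lambda>j. j + m) b). i < j"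
  by (auto simp: perms_def)

lemma pskew_blocks_greater:
  "a \<in> perms m \<Longrightarrow> b \<in> perms n \<Longrightarrow> \<forall>i\<in>set (map (\<lambda>j. j + n) a). \<forall>j\<in>set b. j < i"
  by (auto simp: perms_def)

lemma separable_in_perms: "separable \<pi> \<Longrightarrow> \<pi> \<in> perms (length \<pi>)"
proof (induction rule: separable.induct)
  case (dsum a b)
  then show ?case using psum_in_perms by simp
next
  case (skew a b)
  then show ?case using pskew_in_perms by simp
qed (simp add: perms_def)

lemma separable_nonempty: "separable \<pi> \<Longrightarrow> \<pi> \<noteq> []"
  by (induction rule: separable.induct) (simp_all add: psum_def pskew_def)

lemma psum_stats:
  assumes "a \<in> perms m" and "b \<in> perms n" and "a \<noteq> []" and "b \<noteq> []"
  shows "asc (psum a b) = asc a + asc b + 1" and "des (psum a b) = des a + des b"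
    and "lmax (psum a b) = lmax a + lmax b" and "lmin (psum a b) = lmin a"
    and "rmax (psum a b) = rmax b" and "rmin (psum a b) = rmin a + rmin b"
proof -
  let ?b = "map (\<lambda>j. j + m) b"
  have less: "\<forall>i\<in>set a. \<forall>j\<in>set ?b. i < j"
    using assms(1,2) by (rule psum_blocks_less)
  then have not_greater: "\<forall>i\<in>set a. \<forall>j\<in>set ?b. \<not> j < i"
    by (meson less_asym)
  have "last a \<in> set a" and "hd ?b \<in> set ?b"
    using assms(3,4) by (simp_all add: hd_map)
  with less have "last a < hd ?b"
    by blast
  then show "asc (psum a b) = asc a + asc b + 1" and "des (psum a b) = des a + des b"
    using assms(3,4)
    by (simp_all add: psum_eq_append[OF assms(1)] asc_eq_adjacent_pairs des_eq_adjacent_pairs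
        adjacent_pairs_append adjacent_pairs_map)
  show "lmax (psum a b) = lmax a + lmax b" and "lmin (psum a b) = lmin a"
    using less not_greater assms(3)
    by (simp_all add: psum_eq_append[OF assms(1)] lmax_eq_left_records lmin_eq_left_records
        left_records_append_related left_records_append_unrelated left_records_map)
  show "rmax (psum a b) = rmax b" and "rmin (psum a b) = rmin a + rmin b"
    using less not_greater assms(4)
    by (simp_all add: psum_eq_append[OF assms(1)] rmax_eq_right_records rmin_eq_right_records
        right_records_append_related right_records_append_unrelated right_records_map)
qed

lemma pskew_stats:
  assumes "a \<in> perms m" and "b \<in> perms n" and "a \<noteq> []" and "b \<noteq> []"
  shows "asc (pskew a b) = asc a + asc b" and "des (pskew a b) = des a + des b + 1"
    and "lmax (pskew a b) = lmax a" and "lmin (pskew a b) = lmin a + lmin b"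
    and "rmax (pskew a b) = rmax a + rmax b" and "rmin (pskew a b) = rmin b"
proof -
  let ?a = "map (\<lambda>j. j + n) a"
  have greater: "\<forall>i\<in>set ?a. \<forall>j\<in>set b. j < i"
    using assms(1,2) by (rule pskew_blocks_greater)
  then have not_less: "\<forall>i\<in>set ?a. \<forall>j\<in>set b. \<not> i < j"
    by (meson less_asym)
  have "last ?a \<in> set ?a" and "hd b \<in> set b"
    using assms(3,4) by (simp_all add: last_map)
  with greater have "hd b < last ?a"
    by blast
  then show "asc (pskew a b) = asc a + asc b" and "des (pskew a b) = des a + des b + 1"
    using assms(3,4)
    by (simp_all add: pskew_eq_append[OF assms(2)] asc_eq_adjacent_pairs des_eq_adjacent_pairs
        adjacent_pairs_append adjacent_pairs_map)
  show "lmax (pskew a b) = lmax a" and "lmin (pskew a b) = lmin a + lmin b"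
    using greater not_less assms(3)
    by (simp_all add: pskew_eq_append[OF assms(2)] lmax_eq_left_records lmin_eq_left_records
        left_records_append_related left_records_append_unrelated left_records_map)
  show "rmax (pskew a b) = rmax a + rmax b" and "rmin (pskew a b) = rmin b"
    using greater not_less assms(4)
    by (simp_all add: pskew_eq_append[OF assms(2)] rmax_eq_right_records rmin_eq_right_records
        right_records_append_related right_records_append_unrelated right_records_map)
qed

lemma wt_psum:
  assumes "separable a" and "separable b"
  shows "wt p q x y u v (psum a b) = p * wt p q x 1 u v a * wt p q x y 1 v b"
  using psum_stats[OF separable_in_perms separable_in_perms] assms separable_nonempty
  by (simp add: wt_def power_add mult_ac)

lemma wt_pskew:
  assumes "separable a" and "separable b"
  shows "wt p q x y u v (pskew a b) = q * wt p q x y u 1 a * wt p q 1 y u v b"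
  using pskew_stats[OF separable_in_perms separable_in_perms] assms separable_nonempty
  by (simp add: wt_def power_add mult_ac)

lemma wt_singleton: "wt p q x y u v [1] = x * y * u * v"
proof -
  have "{i. i < Suc 0 \<and> P i} = (if P 0 then {0} else {})" for P
    by auto
  then show ?thesis
    by (simp add: wt_def asc_def des_def lmax_def lmin_def rmax_def rmin_def)
qed

section \<open>Decomposition of separable permutations\<close>

lemma irreducible_perm_singleton: "irreducible_perm [1]"
  by (simp add: irreducible_perm_def)

lemma not_irreducible_perm_if_split:
  assumes "0 < m" and "m < length \<pi>" and "\<forall>a\<in>set (take m \<pi>). \<forall>b\<in>set (drop m \<pi>). a < b"
  shows "\<not> irreducible_perm \<pi>"
proof -
  have "\<pi> \<noteq> [1]"
    using assms(1,2) by auto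
  moreover have "2 \<le> m + 1 \<and> m + 1 \<le> length \<pi> \<and>
      (\<forall>a\<in>set (take (m + 1 - 1) \<pi>). \<forall>b\<in>set (drop (m + 1 - 1) \<pi>). a < b)"
    using assms by simp
  ultimately show ?thesis
    unfolding irreducible_perm_def by blast
qed

lemma irreducible_perm_if_last_less_hd:
  assumes "2 \<le> length \<pi>" and "last \<pi> < hd \<pi>"
  shows "irreducible_perm \<pi>"
  unfolding irreducible_perm_def
proof (intro disjI2 conjI notI)
  assume "\<exists>i. 2 \<le> i \<and> i \<le> length \<pi> \<and>
    (\<forall>a\<in>set (take (i - 1) \<pi>). \<forall>b\<in>set (drop (i - 1) \<pi>). a < b)"
  then obtain i where i: "2 \<le> i" "i \<le> length \<pi>"
    and less: "\<forall>a\<in>set (take (i - 1) \<pi>). \<forall>b\<in>set (drop (i - 1) \<pi>). a < b"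
    by blast
  have "\<pi> \<noteq> []"
    using i by (cases \<pi>) simp_all
  with i have "hd \<pi> = hd (take (i - 1) \<pi>)" and "take (i - 1) \<pi> \<noteq> []"
    by simp_all
  moreover have "last \<pi> = last (drop (i - 1) \<pi>)" and "drop (i - 1) \<pi> \<noteq> []"
    using i by simp_all
  ultimately show False
    using less assms(2) by (metis hd_in_set last_in_set not_less_iff_gr_or_eq)
qed (fact assms(1))

lemma psum_not_irreducible:
  assumes "a \<in> perms m" and "b \<in> perms n" and "a \<noteq> []" and "b \<noteq> []"
  shows "\<not> irreducible_perm (psum a b)"
proof (rule not_irreducible_perm_if_split[where m=m])
  show "0 < m" and "m < length (psum a b)"
    using assms perms_length by fastforce+
  show "\<forall>i\<in>set (take m (psum a b)). \<forall>j\<in>set (drop m (psum a b)). i < j"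
    using psum_blocks_less[OF assms(1,2)] perms_length[OF assms(1)]
    by (simp add: psum_eq_append[OF assms(1)])
qed

lemma pskew_irreducible:
  assumes "a \<in> perms m" and "b \<in> perms n" and "a \<noteq> []" and "b \<noteq> []"
  shows "irreducible_perm (pskew a b)"
proof (rule irreducible_perm_if_last_less_hd)
  show "2 \<le> length (pskew a b)"
    using assms(3,4) by (cases a; cases b) simp_all
  have "last b \<in> set b" and "hd (map (\<lambda>j. j + n) a) \<in> set (map (\<lambda>j. j + n) a)"
    using assms(3,4) by (simp_all add: hd_map)
  then have "last b < hd (map (\<lambda>j. j + n) a)"
    using pskew_blocks_greater[OF assms(1,2)] by blast
  then show "last (pskew a b) < hd (pskew a b)"
    using assms(3,4) by (simp add: pskew_eq_append[OF assms(2)])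
qed

lemma separable_psum_not_irreducible:
  "separable a \<Longrightarrow> separable b \<Longrightarrow> \<not> irreducible_perm (psum a b)"
  using psum_not_irreducible separable_in_perms separable_nonempty by blast

lemma separable_pskew_irreducible:
  "separable a \<Longrightarrow> separable b \<Longrightarrow> irreducible_perm (pskew a b)"
  using pskew_irreducible separable_in_perms separable_nonempty by blast

lemma separable_sum_decomposition:
  assumes "separable \<pi>" and "\<not> irreducible_perm \<pi>"
  shows "\<exists>a b. separable a \<and> separable b \<and> irreducible_perm b \<and> \<pi> = psum a b"
  using assms
proof (induction rule: separable.induct)
  case one
  then show ?case using irreducible_perm_singleton by simp
next
  case (dsum a b)
  show ?case
  proof (cases "irreducible_perm b")
    case False
    with dsum.IH(2) obtain c d where "separable c" "separable d" "irreducible_perm d" "b = psum c d"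
      by blast
    with dsum.hyps show ?thesis
      by (metis psum_assoc separable.dsum)
  qed (use dsum.hyps in blast)
next
  case (skew a b)
  then show ?case using separable_pskew_irreducible by blast
qed

lemma separable_skew_decomposition:
  assumes "separable \<pi>" and "irreducible_perm \<pi>" and "\<pi> \<noteq> [1]"
  shows "\<exists>a b. separable a \<and> separable b \<and> (a = [1] \<or> \<not> irreducible_perm a) \<and> \<pi> = pskew a b"
  using assms
proof (induction rule: separable.induct)
  case one
  then show ?case by simp
next
  case (dsum a b)
  then show ?case using separable_psum_not_irreducible by blast
next
  case (skew a b)
  show ?case
  proof (cases "a = [1] \<or> \<not> irreducible_perm a")
    case False
    with skew.IH(1) obtain c d
      where "separable c" "separable d" "c = [1] \<or> \<not> irreducible_perm c" "a = pskew c d"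
      by blast
    with skew.hyps show ?thesis
      by (metis pskew_assoc separable.skew)
  qed (use skew.hyps in blast)
qed

lemma psum_cancel:
  assumes "psum a b = psum a' b'" and "length a = length a'"
  shows "a = a'" and "b = b'"
proof -
  have "a @ map (\<lambda>j. j + length a) b = a' @ map (\<lambda>j. j + length a) b'"
    using assms by (simp add: psum_def)
  then have "a = a'" and "map (\<lambda>j. j + length a) b = map (\<lambda>j. j + length a) b'"
    using assms(2) by simp_all
  then show "a = a'" and "b = b'"
    by (simp_all add: inj_map_eq_map inj_on_def)
qed

lemma pskew_cancel:
  assumes "pskew a b = pskew a' b'" and "length a = length a'"
  shows "a = a'" and "b = b'"
proof -
  have "length b = length b'"
    using arg_cong[OF assms(1), of length] assms(2) by simp
  then have "map (\<lambda>j. j + length b) a @ b = map (\<lambda>j. j + length b) a' @ b'"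
    using assms by (simp add: pskew_def)
  then have "map (\<lambda>j. j + length b) a = map (\<lambda>j. j + length b) a'" and "b = b'"
    using assms(2) by simp_all
  then show "a = a'" and "b = b'"
    by (simp_all add: inj_map_eq_map inj_on_def)
qed

(* The end of a' cuts b into a lower piece lying inside a' and an upper piece that is b' shifted. *)
lemma psum_eq_psum_not_irreducible:
  assumes eq: "psum a b = psum a' b'" and less: "length a < length a'"
    and a': "a' \<in> perms (length a')" and b': "b' \<in> perms (length b')" "b' \<noteq> []"
  shows "\<not> irreducible_perm b"
proof -
  define k k' d where "k = length a" and "k' = length a'" and "d = k' - k"
  have split: "map (\<lambda>j. j + k) b = drop k a' @ map (\<lambda>j. j + k') b'"
    using arg_cong[OF eq, of "drop k"] less by (simp add: psum_def k_def k'_def)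
  have d: "length (drop k a') = d"
    by (simp add: k'_def d_def)
  have low: "map (\<lambda>j. j + k) (take d b) = drop k a'"
    using arg_cong[OF split, of "take d"] d by (simp add: take_map)
  have high: "map (\<lambda>j. j + k) (drop d b) = map (\<lambda>j. j + k') b'"
    using arg_cong[OF split, of "drop d"] d by (simp add: drop_map)
  have len: "length b = d + length b'"
    using arg_cong[OF split, of length] d by simp
  show ?thesis
  proof (rule not_irreducible_perm_if_split[where m=d])
    have "0 < length b'"
      using b'(2) by simp
    then show "0 < d" and "d < length b"
      using less len unfolding d_def k_def k'_def by arith+
    show "\<forall>i\<in>set (take d b). \<forall>j\<in>set (drop d b). i < j"
    proof (intro ballI)
      fix i j assume i: "i \<in> set (take d b)" and j: "j \<in> set (drop d b)"
      have "i + k \<in> set a'"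
        using i arg_cong[OF low, of set] by (auto dest: in_set_dropD)
      then have "i + k \<le> k'"
        using a' by (auto simp: perms_def k'_def)
      moreover have "j + k \<in> (\<lambda>j. j + k') ` set b'"
        using j arg_cong[OF high, of set] by auto
      then have "k' < j + k"
        using b'(1) by (auto simp: perms_def)
      ultimately show "i < j"
        by simp
    qed
  qed
qed

(* a' is a shifted copy of a followed by a nonempty initial piece of b, so it starts above
   length b and ends at most there. *)
lemma pskew_eq_pskew_irreducible:
  assumes eq: "pskew a b = pskew a' b'" and less: "length a < length a'"
    and a: "a \<in> perms (length a)" "a \<noteq> []" and b: "b \<in> perms (length b)"
  shows "irreducible_perm a'"
proof (rule irreducible_perm_if_last_less_hd)
  define n n' d where "n = length b" and "n' = length b'" and "d = length a' - length a"
  have shape: "map (\<lambda>j. j + n') a' = map (\<lambda>j. j + n) a @ take d b"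
    using arg_cong[OF eq, of "take (length a')"] less by (simp add: pskew_def n_def n'_def d_def)
  have "length a + n = length a' + n'"
    using arg_cong[OF eq, of length] by (simp add: n_def n'_def)
  then have "0 < d" and "d \<le> length b"
    using less unfolding d_def n_def by arith+
  then have "take d b \<noteq> []"
    by (cases b) simp_all
  have "a' \<noteq> []"
    using less by auto
  have hd: "hd a' + n' = hd a + n"
    using arg_cong[OF shape, of hd] \<open>a' \<noteq> []\<close> a(2) by (simp add: hd_map)
  have last: "last a' + n' = last (take d b)"
    using arg_cong[OF shape, of last] \<open>a' \<noteq> []\<close> \<open>take d b \<noteq> []\<close> by (simp add: last_map)
  have "last (take d b) \<in> set b"
    using \<open>take d b \<noteq> []\<close> by (meson in_set_takeD last_in_set)
  then have "last (take d b) \<le> n"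
    using b by (auto simp: perms_def n_def)
  moreover have "1 \<le> hd a"
    using a by (auto simp: perms_def)
  ultimately show "last a' < hd a'"
    using hd last by linarith
  show "2 \<le> length a'"
    using less a(2) by (cases a) simp_all
qed

section \<open>Generating functions\<close>

definition graded_pairs :: "(nat \<Rightarrow> 'a set) \<Rightarrow> (nat \<Rightarrow> 'b set) \<Rightarrow> nat \<Rightarrow> ('a \<times> 'b) set" where
  "graded_pairs A B n = (\<Union>i\<le>n. A i \<times> B (n - i))"

lemma graded_pairs_iff:
  "(a, b) \<in> graded_pairs A B n \<longleftrightarrow> (\<exists>i\<le>n. a \<in> A i \<and> b \<in> B (n - i))"
  by (auto simp: graded_pairs_def)

lemma fps_nth_mult_graded_pairs:
  fixes f :: "'b \<Rightarrow> 'a::comm_ring_1" and g :: "'c \<Rightarrow> 'a"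
  assumes "\<And>i. finite (A i)" and "\<And>i. finite (B i)" and "\<And>i j. i \<noteq> j \<Longrightarrow> A i \<inter> A j = {}"
  shows "fps_nth (Abs_fps (\<lambda>n. \<Sum>a\<in>A n. f a) * Abs_fps (\<lambda>n. \<Sum>b\<in>B n. g b)) n
       = (\<Sum>(a, b)\<in>graded_pairs A B n. f a * g b)"
proof -
  have "fps_nth (Abs_fps (\<lambda>n. \<Sum>a\<in>A n. f a) * Abs_fps (\<lambda>n. \<Sum>b\<in>B n. g b)) n
      = (\<Sum>i\<le>n. (\<Sum>a\<in>A i. f a) * (\<Sum>b\<in>B (n - i). g b))"
    by (simp add: fps_mult_nth atLeast0AtMost)
  also have "\<dots> = (\<Sum>i\<le>n. \<Sum>(a, b)\<in>A i \<times> B (n - i). f a * g b)"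
    by (simp add: sum_product sum.cartesian_product)
  also have "\<dots> = (\<Sum>(a, b)\<in>graded_pairs A B n. f a * g b)"
    unfolding graded_pairs_def
    by (rule sum.UNION_disjoint[symmetric]) (use assms in blast)+
  finally show ?thesis .
qed

definition sep_perms :: "nat \<Rightarrow> nat list set" where
  "sep_perms n = {\<pi> \<in> perms n. separable \<pi>}"

definition irr_sep_perms :: "nat \<Rightarrow> nat list set" where
  "irr_sep_perms n = {\<pi> \<in> sep_perms n. irreducible_perm \<pi>}"

(* Among separable permutations these are exactly the ones that are not a skew sum of two
   nonempty permutations. *)
definition skew_indec_sep_perms :: "nat \<Rightarrow> nat list set" where
  "skew_indec_sep_perms n = {\<pi> \<in> sep_perms n. \<pi> = [1] \<or> \<not> irreducible_perm \<pi>}"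

lemma sep_perms_iff: "\<pi> \<in> sep_perms n \<longleftrightarrow> separable \<pi> \<and> length \<pi> = n"
  unfolding sep_perms_def using separable_in_perms perms_length by blast

lemma finite_sep_perms: "finite (sep_perms n)"
  by (simp add: sep_perms_def finite_perms)

lemma finite_irr_sep_perms: "finite (irr_sep_perms n)"
  by (simp add: irr_sep_perms_def finite_sep_perms)

lemma finite_skew_indec_sep_perms: "finite (skew_indec_sep_perms n)"
  by (simp add: skew_indec_sep_perms_def finite_sep_perms)

lemma disjoint_sep_perms: "i \<noteq> j \<Longrightarrow> sep_perms i \<inter> sep_perms j = {}"
  by (auto simp: sep_perms_iff)

lemma disjoint_skew_indec_sep_perms:
  "i \<noteq> j \<Longrightarrow> skew_indec_sep_perms i \<inter> skew_indec_sep_perms j = {}"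
  by (auto simp: skew_indec_sep_perms_def sep_perms_iff)

lemma singleton_in_sep_perms_iff: "[1] \<in> sep_perms n \<longleftrightarrow> n = 1"
  using singleton_in_perms_iff[of n] separable.one by (simp add: sep_perms_def)

lemma singleton_in_irr_sep_perms_iff: "[1] \<in> irr_sep_perms n \<longleftrightarrow> n = 1"
  using singleton_in_sep_perms_iff[of n] irreducible_perm_singleton by (simp add: irr_sep_perms_def)

lemma inj_on_psum: "inj_on (\<lambda>(a, b). psum a b) (graded_pairs sep_perms irr_sep_perms n)"
proof (rule inj_onI, clarify)
  fix a b a' b'
  assume ab: "(a, b) \<in> graded_pairs sep_perms irr_sep_perms n"
    and ab': "(a', b') \<in> graded_pairs sep_perms irr_sep_perms n"
    and eq: "psum a b = psum a' b'"
  obtain i i' where "a \<in> sep_perms i" "b \<in> irr_sep_perms (n - i)"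
    and "a' \<in> sep_perms i'" "b' \<in> irr_sep_perms (n - i')"
    using ab ab' unfolding graded_pairs_iff by blast
  then have sep: "separable a" "separable a'" "separable b" "separable b'"
    and irr: "irreducible_perm b" "irreducible_perm b'"
    by (simp_all add: irr_sep_perms_def sep_perms_iff)
  have "length a = length a'"
  proof (rule linorder_cases[of "length a" "length a'"])
    assume "length a < length a'"
    from psum_eq_psum_not_irreducible[OF eq this] show ?thesis
      using irr(1) sep separable_in_perms separable_nonempty by simp
  next
    assume "length a' < length a"
    from psum_eq_psum_not_irreducible[OF eq[symmetric] this] show ?thesis
      using irr(2) sep separable_in_perms separable_nonempty by simp
  qed
  with eq show "a = a' \<and> b = b'"
    by (blast intro: psum_cancel)
qed

lemma psum_image_graded_pairs:
  "(\<lambda>(a, b). psum a b) ` graded_pairs sep_perms irr_sep_perms n = sep_perms n - irr_sep_perms n"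
proof (intro equalityI subsetI)
  fix \<pi> assume "\<pi> \<in> (\<lambda>(a, b). psum a b) ` graded_pairs sep_perms irr_sep_perms n"
  then obtain i a b where "i \<le> n" "a \<in> sep_perms i" "b \<in> irr_sep_perms (n - i)" "\<pi> = psum a b"
    unfolding graded_pairs_def by auto
  then show "\<pi> \<in> sep_perms n - irr_sep_perms n"
    using separable.dsum separable_psum_not_irreducible
    by (auto simp: irr_sep_perms_def sep_perms_iff)
next
  fix \<pi> assume "\<pi> \<in> sep_perms n - irr_sep_perms n"
  then have "separable \<pi>" "length \<pi> = n" "\<not> irreducible_perm \<pi>"
    by (simp_all add: irr_sep_perms_def sep_perms_iff)
  then obtain a b where "separable a" "separable b" "irreducible_perm b" "\<pi> = psum a b"
    using separable_sum_decomposition by blast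
  moreover from this have "(a, b) \<in> graded_pairs sep_perms irr_sep_perms n"
    using \<open>length \<pi> = n\<close>
    by (auto simp: graded_pairs_iff irr_sep_perms_def sep_perms_iff intro!: exI[where x="length a"])
  ultimately show "\<pi> \<in> (\<lambda>(a, b). psum a b) ` graded_pairs sep_perms irr_sep_perms n"
    by force
qed

lemma bij_betw_psum:
  "bij_betw (\<lambda>(a, b). psum a b) (graded_pairs sep_perms irr_sep_perms n) (sep_perms n - irr_sep_perms n)"
  using inj_on_psum psum_image_graded_pairs by (rule bij_betw_imageI)

lemma inj_on_pskew: "inj_on (\<lambda>(a, b). pskew a b) (graded_pairs skew_indec_sep_perms sep_perms n)"
proof (rule inj_onI, clarify)
  fix a b a' b'
  assume "(a, b) \<in> graded_pairs skew_indec_sep_perms sep_perms n"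
    and "(a', b') \<in> graded_pairs skew_indec_sep_perms sep_perms n"
    and eq: "pskew a b = pskew a' b'"
  then obtain i i' where "a \<in> skew_indec_sep_perms i" "b \<in> sep_perms (n - i)"
    and "a' \<in> skew_indec_sep_perms i'" "b' \<in> sep_perms (n - i')"
    unfolding graded_pairs_iff by blast
  then have sep: "separable a" "separable a'" "separable b" "separable b'"
    and red: "a = [1] \<or> \<not> irreducible_perm a" "a' = [1] \<or> \<not> irreducible_perm a'"
    by (simp_all add: skew_indec_sep_perms_def sep_perms_iff)
  have "length a = length a'"
  proof (rule linorder_cases[of "length a" "length a'"])
    assume less: "length a < length a'"
    from pskew_eq_pskew_irreducible[OF eq this] have "a' = [1]"
      using red(2) sep separable_in_perms separable_nonempty by simp
    with less separable_nonempty[OF sep(1)] show ?thesis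
      by simp
  next
    assume less: "length a' < length a"
    from pskew_eq_pskew_irreducible[OF eq[symmetric] this] have "a = [1]"
      using red(1) sep separable_in_perms separable_nonempty by simp
    with less separable_nonempty[OF sep(2)] show ?thesis
      by simp
  qed
  with eq show "a = a' \<and> b = b'"
    by (blast intro: pskew_cancel)
qed

lemma pskew_image_graded_pairs:
  "(\<lambda>(a, b). pskew a b) ` graded_pairs skew_indec_sep_perms sep_perms n = irr_sep_perms n - {[1]}"
proof (intro equalityI subsetI)
  fix \<pi> assume "\<pi> \<in> (\<lambda>(a, b). pskew a b) ` graded_pairs skew_indec_sep_perms sep_perms n"
  then obtain i a b where "i \<le> n" "a \<in> skew_indec_sep_perms i" "b \<in> sep_perms (n - i)" "\<pi> = pskew a b"
    unfolding graded_pairs_def by auto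
  moreover from this have "\<pi> \<noteq> [1]"
    using separable_nonempty by (cases a; cases b) (auto simp: skew_indec_sep_perms_def sep_perms_iff pskew_def)
  ultimately show "\<pi> \<in> irr_sep_perms n - {[1]}"
    using separable.skew separable_pskew_irreducible
    by (auto simp: irr_sep_perms_def skew_indec_sep_perms_def sep_perms_iff)
next
  fix \<pi> assume "\<pi> \<in> irr_sep_perms n - {[1]}"
  then have "separable \<pi>" "length \<pi> = n" "irreducible_perm \<pi>" "\<pi> \<noteq> [1]"
    by (simp_all add: irr_sep_perms_def sep_perms_iff)
  then obtain a b where "separable a" "separable b" "a = [1] \<or> \<not> irreducible_perm a" "\<pi> = pskew a b"
    using separable_skew_decomposition by blast
  moreover from this have "(a, b) \<in> graded_pairs skew_indec_sep_perms sep_perms n"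
    using \<open>length \<pi> = n\<close>
    by (auto simp: graded_pairs_iff skew_indec_sep_perms_def sep_perms_iff intro!: exI[where x="length a"])
  ultimately show "\<pi> \<in> (\<lambda>(a, b). pskew a b) ` graded_pairs skew_indec_sep_perms sep_perms n"
    by force
qed

lemma bij_betw_pskew:
  "bij_betw (\<lambda>(a, b). pskew a b) (graded_pairs skew_indec_sep_perms sep_perms n) (irr_sep_perms n - {[1]})"
  using inj_on_pskew pskew_image_graded_pairs by (rule bij_betw_imageI)

lemma Sgf_eq_sum_sep_perms: "Sgf p q x y u v = Abs_fps (\<lambda>n. \<Sum>\<pi>\<in>sep_perms n. wt p q x y u v \<pi>)"
  by (simp add: Sgf_def sep_perms_def)

lemma Igf_eq_sum_irr_sep_perms: "Igf p q x y u v = Abs_fps (\<lambda>n. \<Sum>\<pi>\<in>irr_sep_perms n. wt p q x y u v \<pi>)"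
  by (simp add: Igf_def irr_sep_perms_def sep_perms_def)

lemma sum_skew_indec_sep_perms:
  "(\<Sum>\<pi>\<in>skew_indec_sep_perms n. f \<pi>) =
     (\<Sum>\<pi>\<in>sep_perms n - irr_sep_perms n. f \<pi>) + (if n = 1 then f [1] else 0)"
proof -
  define ones where "ones = {\<pi> \<in> sep_perms n. \<pi> = [1]}"
  have "skew_indec_sep_perms n = (sep_perms n - irr_sep_perms n) \<union> ones"
    by (auto simp: skew_indec_sep_perms_def irr_sep_perms_def ones_def)
  moreover have "(sep_perms n - irr_sep_perms n) \<inter> ones = {}"
    using irreducible_perm_singleton by (auto simp: irr_sep_perms_def ones_def)
  ultimately have "(\<Sum>\<pi>\<in>skew_indec_sep_perms n. f \<pi>) =
      (\<Sum>\<pi>\<in>sep_perms n - irr_sep_perms n. f \<pi>) + (\<Sum>\<pi>\<in>ones. f \<pi>)"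
    by (simp add: sum.union_disjoint finite_sep_perms ones_def)
  moreover have "ones = (if n = 1 then {[1]} else {})"
    using singleton_in_sep_perms_iff[of n] by (auto simp: ones_def)
  ultimately show ?thesis
    by simp
qed

lemma sum_irr_sep_perms:
  "(\<Sum>\<pi>\<in>irr_sep_perms n. f \<pi>) =
     (if n = 1 then f [1] else 0) + (\<Sum>\<pi>\<in>irr_sep_perms n - {[1]}. f \<pi>)"
proof (cases "n = 1")
  case True
  then have "[1] \<in> irr_sep_perms n"
    using singleton_in_irr_sep_perms_iff[of n] by simp
  with True show ?thesis
    by (simp add: sum.remove[OF finite_irr_sep_perms])
next
  case False
  then have "irr_sep_perms n - {[1]} = irr_sep_perms n"
    using singleton_in_irr_sep_perms_iff[of n] by simp
  with False show ?thesis
    by simp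
qed

lemma Sgf_minus_Igf:
  "Sgf p q x y u v - Igf p q x y u v = fps_const p * Sgf p q x 1 u v * Igf p q x y 1 v"
proof (rule fps_ext)
  fix n
  have "fps_nth (Sgf p q x y u v - Igf p q x y u v) n
      = (\<Sum>\<pi>\<in>sep_perms n - irr_sep_perms n. wt p q x y u v \<pi>)"
    by (simp add: Sgf_eq_sum_sep_perms Igf_eq_sum_irr_sep_perms sum_diff finite_sep_perms
        irr_sep_perms_def)
  also have "\<dots> = (\<Sum>(a, b)\<in>graded_pairs sep_perms irr_sep_perms n. wt p q x y u v (psum a b))"
    by (simp add: sum.reindex_bij_betw[OF bij_betw_psum, symmetric] case_prod_unfold)
  also have "\<dots> = p * (\<Sum>(a, b)\<in>graded_pairs sep_perms irr_sep_perms n.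
      wt p q x 1 u v a * wt p q x y 1 v b)"
    unfolding sum_distrib_left
    by (rule sum.cong) (auto simp: graded_pairs_iff irr_sep_perms_def sep_perms_iff wt_psum mult.assoc)
  also have "\<dots> = p * fps_nth (Sgf p q x 1 u v * Igf p q x y 1 v) n"
    unfolding Sgf_eq_sum_sep_perms Igf_eq_sum_irr_sep_perms
    by (subst fps_nth_mult_graded_pairs)
      (simp_all add: finite_sep_perms finite_irr_sep_perms disjoint_sep_perms)
  also have "\<dots> = fps_nth (fps_const p * Sgf p q x 1 u v * Igf p q x y 1 v) n"
    by (simp only: mult.assoc fps_mult_left_const_nth)
  finally show "fps_nth (Sgf p q x y u v - Igf p q x y u v) n
      = fps_nth (fps_const p * Sgf p q x 1 u v * Igf p q x y 1 v) n" .
qed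

lemma Sgf_minus_Igf_plus_X:
  "Sgf p q x y u v - Igf p q x y u v + fps_const (x * y * u * v) * fps_X
     = Abs_fps (\<lambda>n. \<Sum>\<pi>\<in>skew_indec_sep_perms n. wt p q x y u v \<pi>)"
proof (rule fps_ext)
  fix n
  show "fps_nth (Sgf p q x y u v - Igf p q x y u v + fps_const (x * y * u * v) * fps_X) n
      = fps_nth (Abs_fps (\<lambda>n. \<Sum>\<pi>\<in>skew_indec_sep_perms n. wt p q x y u v \<pi>)) n"
    using wt_singleton[of p q x y u v]
    by (simp add: Sgf_eq_sum_sep_perms Igf_eq_sum_irr_sep_perms sum_diff finite_sep_perms
        irr_sep_perms_def sum_skew_indec_sep_perms)
qed

lemma Igf_recurrence:
  "Igf p q x y u v = fps_const (x * y * u * v) * fps_X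
     + fps_const q * (Sgf p q x y u 1 - Igf p q x y u 1 + fps_const (x * y * u) * fps_X) * Sgf p q 1 y u v"
proof (rule fps_ext)
  fix n
  let ?K = "Sgf p q x y u 1 - Igf p q x y u 1 + fps_const (x * y * u) * fps_X"
  have K: "?K = Abs_fps (\<lambda>n. \<Sum>\<pi>\<in>skew_indec_sep_perms n. wt p q x y u 1 \<pi>)"
    using Sgf_minus_Igf_plus_X[of p q x y u 1] by simp
  have "fps_nth (Igf p q x y u v) n
      = (if n = 1 then x * y * u * v else 0) + (\<Sum>\<pi>\<in>irr_sep_perms n - {[1]}. wt p q x y u v \<pi>)"
    using wt_singleton[of p q x y u v] by (simp add: Igf_eq_sum_irr_sep_perms sum_irr_sep_perms)
  also have "(\<Sum>\<pi>\<in>irr_sep_perms n - {[1]}. wt p q x y u v \<pi>)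
      = (\<Sum>(a, b)\<in>graded_pairs skew_indec_sep_perms sep_perms n. wt p q x y u v (pskew a b))"
    using sum.reindex_bij_betw[OF bij_betw_pskew, of "wt p q x y u v" n] by (simp add: case_prod_unfold)
  also have "\<dots> = q * (\<Sum>(a, b)\<in>graded_pairs skew_indec_sep_perms sep_perms n.
      wt p q x y u 1 a * wt p q 1 y u v b)"
    unfolding sum_distrib_left
    by (rule sum.cong) (auto simp: graded_pairs_iff skew_indec_sep_perms_def sep_perms_iff wt_pskew mult.assoc)
  also have "\<dots> = q * fps_nth (?K * Sgf p q 1 y u v) n"
    unfolding K unfolding Sgf_eq_sum_sep_perms
    by (subst fps_nth_mult_graded_pairs)
      (simp_all add: finite_sep_perms finite_skew_indec_sep_perms disjoint_skew_indec_sep_perms)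
  finally show "fps_nth (Igf p q x y u v) n = fps_nth (fps_const (x * y * u * v) * fps_X
      + fps_const q * ?K * Sgf p q 1 y u v) n"
    by (simp add: mult.assoc fps_X_nth)
qed

theorem theorem3:
  fixes p q x y u v :: "'a::comm_ring_1"
  shows "(Sgf p q x y u v =
           fps_const (x*y*u*v) * fps_X
         + fps_const p * Sgf p q x 1 u v * Igf p q x y 1 v
         + fps_const q * (Sgf p q x y u 1 - Igf p q x y u 1 + fps_const (x*y*u) * fps_X)
             * Sgf p q 1 y u v)
       \<and> Igf p q x y u v =
           fps_const (x*y*u*v) * fps_X
         + fps_const q * (Sgf p q x y u 1 - Igf p q x y u 1 + fps_const (x*y*u) * fps_X)
             * Sgf p q 1 y u v"
proof
  have "Sgf p q x y u v = Igf p q x y u v + fps_const p * Sgf p q x 1 u v * Igf p q x y 1 v"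
    using Sgf_minus_Igf[of p q x y u v] by (simp add: diff_eq_eq)
  then show "Sgf p q x y u v =
           fps_const (x*y*u*v) * fps_X
         + fps_const p * Sgf p q x 1 u v * Igf p q x y 1 v
         + fps_const q * (Sgf p q x y u 1 - Igf p q x y u 1 + fps_const (x*y*u) * fps_X)
             * Sgf p q 1 y u v"
    using Igf_recurrence[of p q x y u v] by (simp only: ac_simps)
qed (rule Igf_recurrence)

end
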